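(* Let $k \ge 1$ be an integer, let $H$ be a graph, and let $x_1,\dots,x_k,y_1,\dots,y_k$ be $2k$ distinct vertices of $H$. If $\tau(H) \ge 4k-3$, then $H$ contains a matching $\{m_1,\dots,m_k\}$ of size $k$ such that $m_i \cap \{x_j,y_j\} = \emptyset$ for all $i \neq j$.
   Context: All graphs are finite and simple. $\tau(H)$ denotes the vertex cover number of $H$ (minimum size of a vertex set meeting every edge of $H$). Edges are regarded as 2-element vertex sets. *)

theory Defs
  imports Main
begin

definition simple_graph :: "'a set \<Rightarrow> 'a set set \<Rightarrow> bool" where
  "simple_graph V E \<longleftrightarrow> finite V \<and> (\<forall>e\<in>E. e \<subseteq> V \<and> card e = 2)"

definition vertex_cover :: "'a set \<Rightarrow> 'a set set \<Rightarrow> 'a set \<Rightarrow> bool" where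
  "vertex_cover V E C \<longleftrightarrow> C \<subseteq> V \<and> (\<forall>e\<in>E. e \<inter> C \<noteq> {})"

definition tau :: "'a set \<Rightarrow> 'a set set \<Rightarrow> nat" where
  "tau V E = (LEAST n. \<exists>C. vertex_cover V E C \<and> card C = n)"

end

theory Submission
  imports Defs
begin

text \<open>Greedy induction on k, for arbitrary terminal sets T j of at most two vertices. If
every cover has at least 4k-3 vertices, the at most 2(k-1) terminals of the first k-1 pairs
are not a cover, so some edge e avoids them all; it becomes the k-th matching edge.
Deleting e and the k-th terminal pair (at most 4 vertices) together with every edge meeting
them lowers the cover bound by at most 4, to 4(k-1)-3, and the induction hypothesis
supplies the first k-1 matching edges inside the remaining graph.\<close>

definition cover_number_ge :: "'a set set \<Rightarrow> nat \<Rightarrow> bool" where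
  "cover_number_ge E n \<longleftrightarrow> (\<forall>C. finite C \<and> (\<forall>e\<in>E. e \<inter> C \<noteq> {}) \<longrightarrow> n \<le> card C)"

definition avoiding_matching ::
    "'a set set \<Rightarrow> (nat \<Rightarrow> 'a set) \<Rightarrow> nat \<Rightarrow> (nat \<Rightarrow> 'a set) \<Rightarrow> bool" where
  "avoiding_matching E T k m \<longleftrightarrow>
     (\<forall>i\<in>{1..k}. m i \<in> E)
   \<and> (\<forall>i\<in>{1..k}. \<forall>j\<in>{1..k}. i \<noteq> j \<longrightarrow> m i \<inter> m j = {})
   \<and> (\<forall>i\<in>{1..k}. \<forall>j\<in>{1..k}. i \<noteq> j \<longrightarrow> m i \<inter> T j = {})"

lemma cover_number_ge_mono:
  "cover_number_ge E n \<Longrightarrow> m \<le> n \<Longrightarrow> cover_number_ge E m"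
  unfolding cover_number_ge_def by (meson le_trans)

lemma cover_number_ge_tau:
  assumes "simple_graph V E"
  shows "cover_number_ge E (tau V E)"
  unfolding cover_number_ge_def
proof (intro allI impI)
  fix C
  assume C: "finite C \<and> (\<forall>e\<in>E. e \<inter> C \<noteq> {})"
  moreover have "\<forall>e\<in>E. e \<subseteq> V"
    using assms unfolding simple_graph_def by blast
  ultimately have cover: "vertex_cover V E (C \<inter> V)"
    unfolding vertex_cover_def by blast
  have "tau V E \<le> card (C \<inter> V)"
    unfolding tau_def by (rule Least_le) (use cover in blast)
  also have "\<dots> \<le> card C"
    using C by (intro card_mono) auto
  finally show "tau V E \<le> card C" .
qed

lemma edge_avoiding_small_set:
  assumes "cover_number_ge E n" and "finite X" and "card X < n"
  shows "\<exists>e\<in>E. e \<inter> X = {}"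
proof (rule ccontr)
  assume "\<not> (\<exists>e\<in>E. e \<inter> X = {})"
  then have "n \<le> card X"
    using assms(1,2) unfolding cover_number_ge_def by blast
  with assms(3) show False
    by simp
qed

lemma cover_number_ge_delete:
  assumes "cover_number_ge E n" and "finite Y"
  shows "cover_number_ge {e\<in>E. e \<inter> Y = {}} (n - card Y)"
  unfolding cover_number_ge_def
proof (intro allI impI)
  fix C
  assume C: "finite C \<and> (\<forall>e\<in>{e\<in>E. e \<inter> Y = {}}. e \<inter> C \<noteq> {})"
  then have "\<forall>e\<in>E. e \<inter> (C \<union> Y) \<noteq> {}"
    by auto
  then have "n \<le> card (C \<union> Y)"
    using assms C unfolding cover_number_ge_def by simp
  also have "\<dots> \<le> card C + card Y"
    by (rule card_Un_le)
  finally show "n - card Y \<le> card C"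
    by simp
qed

lemma avoiding_matching_extend:
  assumes "avoiding_matching {f\<in>E. f \<inter> (e \<union> T (Suc k)) = {}} T k m"
    and "e \<in> E" and "\<forall>j\<in>{1..k}. e \<inter> T j = {}"
  shows "avoiding_matching E T (Suc k) (m(Suc k := e))"
proof -
  have old: "\<forall>i\<in>{1..k}. m i \<in> E \<and> m i \<inter> e = {} \<and> m i \<inter> T (Suc k) = {}"
    using assms(1) unfolding avoiding_matching_def by blast
  have new: "{1..Suc k} = insert (Suc k) {1..k}" and fresh: "Suc k \<notin> {1..k}"
    by auto
  show ?thesis
    using assms(1) old assms(2,3) fresh unfolding avoiding_matching_def new
    by (simp add: Int_commute)
qed

lemma avoiding_matching_exists:
  assumes "\<forall>e\<in>E. finite e \<and> card e \<le> 2"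
    and "\<forall>j. finite (T j) \<and> card (T j) \<le> 2"
    and "cover_number_ge E (4 * k - 3)"
  shows "\<exists>m. avoiding_matching E T k m"
  using assms(1,3)
proof (induction k arbitrary: E)
  case 0
  then show ?case
    by (simp add: avoiding_matching_def)
next
  case (Suc k)
  define X where "X = (\<Union>j\<in>{1..k}. T j)"
  have "finite X"
    unfolding X_def using assms(2) by blast
  have "card X \<le> (\<Sum>j\<in>{1..k}. card (T j))"
    unfolding X_def by (rule card_UN_le) simp
  also have "\<dots> \<le> 2 * k"
    using sum_mono[of "{1..k}" "\<lambda>j. card (T j)" "\<lambda>_. 2"] assms(2) by simp
  finally have "card X < 4 * Suc k - 3"
    by simp
  then obtain e where e: "e \<in> E" "e \<inter> X = {}"
    using edge_avoiding_small_set[OF Suc.prems(2) \<open>finite X\<close>] by blast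
  define Y where "Y = e \<union> T (Suc k)"
  have "finite Y"
    unfolding Y_def using Suc.prems(1) e(1) assms(2) by blast
  have "card e \<le> 2" and "card (T (Suc k)) \<le> 2"
    using Suc.prems(1) e(1) assms(2) by auto
  then have "card Y \<le> 4"
    using card_Un_le[of e "T (Suc k)"] unfolding Y_def by linarith
  then have "4 * k - 3 \<le> 4 * Suc k - 3 - card Y"
    by simp
  with cover_number_ge_delete[OF Suc.prems(2) \<open>finite Y\<close>]
  have "cover_number_ge {f\<in>E. f \<inter> Y = {}} (4 * k - 3)"
    by (rule cover_number_ge_mono)
  moreover have "\<forall>f\<in>{f\<in>E. f \<inter> Y = {}}. finite f \<and> card f \<le> 2"
    using Suc.prems(1) by blast
  ultimately obtain m where m: "avoiding_matching {f\<in>E. f \<inter> Y = {}} T k m"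
    using Suc.IH by blast
  have "\<forall>j\<in>{1..k}. e \<inter> T j = {}"
    using e(2) unfolding X_def by blast
  with m e(1) show ?case
    unfolding Y_def by (blast intro: avoiding_matching_extend)
qed

theorem mainTheorem13:
  fixes V :: "'a set" and E :: "'a set set" and k :: nat
    and x y :: "nat \<Rightarrow> 'a"
  assumes "simple_graph V E"
    and "k \<ge> 1"
    and "\<forall>i\<in>{1..k}. x i \<in> V \<and> y i \<in> V"
    and "inj_on x {1..k}" and "inj_on y {1..k}"
    and "x ` {1..k} \<inter> y ` {1..k} = {}"
    and "tau V E \<ge> 4 * k - 3"
  shows "\<exists>m :: nat \<Rightarrow> 'a set.
           (\<forall>i\<in>{1..k}. m i \<in> E)
         \<and> (\<forall>i\<in>{1..k}. \<forall>j\<in>{1..k}. i \<noteq> j \<longrightarrow> m i \<inter> m j = {})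
         \<and> (\<forall>i\<in>{1..k}. \<forall>j\<in>{1..k}. i \<noteq> j \<longrightarrow> m i \<inter> {x j, y j} = {})"
proof -
  have "\<forall>e\<in>E. finite e \<and> card e \<le> 2"
    using assms(1) unfolding simple_graph_def by (auto intro: card_ge_0_finite)
  moreover have "\<forall>j. finite {x j, y j} \<and> card {x j, y j} \<le> 2"
    by (simp add: card_insert_le_m1)
  moreover have "cover_number_ge E (4 * k - 3)"
    using cover_number_ge_tau[OF assms(1)] assms(7) by (rule cover_number_ge_mono)
  ultimately have "\<exists>m. avoiding_matching E (\<lambda>j. {x j, y j}) k m"
    by (rule avoiding_matching_exists)
  then show ?thesis
    unfolding avoiding_matching_def .
qed

end
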